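(* Under the setup in the context, let $(q_k,T_k,H_k)$, $k=0,\dots,K$, be consecutive configurations of the Turing machine (each obtained from the previous one by one machine step), with $q_0,\dots,q_{K-1}\notin F$ and $q_K\in F$. Put $t_k=\operatorname{diag}(T_k^TH_k)\in\{-1,1\}^d$, $v_k=(q_k,t_k)$ and $x_k=e_{v_k}\in\mathbb{R}^V$. Then for each $k=0,\dots,K-1$, applying one step of the iteration below to $(x_k,T_k,H_k)$ yields exactly $(x_{k+1},T_{k+1},H_{k+1})$ (the minimizer defining the direction being unique). Moreover $$c\le \ell(x_k,T_k,H_k)\le c+8b^2d\gamma+3d\gamma\quad (k<K),\qquad \ell(x_K,T_K,H_K)\le c+8b^2d\gamma+3d\gamma-b^3\gamma.$$
   Context: Turing machine: finite state set $Q$, halting states $F\subset Q$, $d$ tapes over alphabet $\{-1,1\}$, transition function $\delta=(\delta_1,\delta_2,\delta_3):Q\times\{-1,1\}^d\to Q\times\{-1,1\}^d\times\{-1,1\}^d$ (new state, symbols written, head moves). A subset $RO\subset\{1,\dots,d\}$ of tapes is read-only. Tapes have length $\tau$: a configuration is $(q,T,H)$ with $T\in\{-1,1\}^{\tau\times d}$ (column $T_i$ = tape $i$) and $H\in\{0,1\}^{\tau\times d}$ with exactly one $1$ per column (head positions). For $(q,t)\in Q\times\{-1,1\}^d$ define the linear head-shift $[\mathcal S(e_{q,t})H]_{i,j}=H_{i+\delta_3(q,t)_j,\,j}$, extended linearly in its first argument; heads are assumed never to reach the tape boundary. One machine step from $(q,T,H)$ with $t=\operatorname{diag}(T^TH)$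 (symbols under the heads) gives $q'=\delta_1(q,t)$; $T'_i=T_i+H_i\,(\delta_2(q,t)_i-t_i)$ for $i\notin RO$ and $T'_i=T_i$ for $i\in RO$; $H'=\mathcal S(e_{q,t})H$. Let $V=Q\times\{-1,1\}^d$ with standard basis $e_v\in\mathbb{R}^V$, $S=\operatorname{conv}\{e_v\}$, $E=\{((q,t),(q',t')):q'=\delta_1(q,t)\}$, and assume there are no $v,w\in V$ (possibly equal) with both $(v,w),(w,v)\in E$. For $v\ne w$ and $0<\mu\le1$, $e^\mu_{vw}=(1-\mu)e_v+\mu e_w$, $S_v^\mu=\operatorname{conv}(\{e_v\}\cup\{e_{vw}^\mu:w\ne v\})$. Constants: $\gamma>0$, $c\in\mathbb{R}$, and $b>0$ with $b^3\ge\frac12(b^3+db)$, $\frac12b^3-db\ge 2db^2$, $b^2>b$. Weights: $\omega_{(q,t)}=-b^3\gamma$ if $q\in F$ and $0$ otherwise; for $v=(q,t)$, $w=(q',t')$ with $(v,w)\in E$, $\omega_{vw}=-\big(b^3+b\,\#\{i:t'_i=t_i\}\big)\gamma$. Let $\ell_S:S\to\mathbb{R}$ be affine on every corner $S^{1/4}_v$ with $\ell_S(e_v)=\omega_v$; $\ell_S(e^{1/4}_{vw})=\omega_{vw}$ and $\ell_S(e^{3/4}_{vw})=\frac12\omega_{vw}$ for $(v,w)\in E$; $\ell_S(e^{1/4}_{vw})=\ell_S(e^{3/4}_{vw})=0$ if $v\ne w$ and neither $(v,w)$ nor $(w,v)$ is in $E$. Linear maps $\mathcal T_\downarrow,\mathcal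 T_\curvearrowright:\mathbb{R}^V\to\mathbb{R}^d$: $\mathcal T_\downarrow e_{q,t}=t$, $\mathcal T_\curvearrowright e_{q,t}=\delta_2(q,t)$. Loss: $\ell(x,T,H)=c+\ell_S(x)+\frac12\gamma\|\operatorname{diag}(T^TH)-\mathcal T_\curvearrowright x\|^2+2b^2\gamma\|\operatorname{diag}(T^T\mathcal S(x)H)-\mathcal T_\downarrow x\|^2+\frac12\gamma\|\mathcal S(x)H-H\|_F^2$, where $\operatorname{diag}(M)$ is the vector of diagonal entries of a $d\times d$ matrix. Iteration (gradient descent in which certain quantities are frozen, "stop-gradient"): from $(x_k,T_k,H_k)$ let $r_k=\operatorname{diag}(T_k^T\mathcal S(x_k)H_k)$ (held constant); $x_{k+1}=\operatorname{argmin}_{y\in S}\partial_{y-x_k}\Phi_k(x_k)$ where $\Phi_k(x)=\ell_S(x)+2b^2\gamma\|r_k-\mathcal T_\downarrow x\|^2$ and $\partial_{y-x}$ is the one-sided directional derivative; $T_{k+1}=T_k-\frac1\gamma G_k$ where $G_k$ is the gradient at $T=T_k$ of $T\mapsto\frac12\gamma\|\operatorname{diag}(T^TH_k)-\mathcal T_\curvearrowright x_k\|^2$ with respect to the columns $T_i$, $i\notin RO$, and zero in the columns $i\in RO$; $H_{k+1}=H_k-\frac1\gamma\nabla_H\big[\frac12\gamma\|\mathcal S(x_k)H_k-H\|_F^2\big]_{H=H_k}$. *)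

theory Defs
  imports "HOL-Analysis.Analysis"
begin

text \<open>Tape symbols in {-1,1} are encoded by bool (True = 1, False = -1) inside the
  finite index set V = Q x {-1,1}^d; tapes are indexed by a finite type 'd (d = CARD('d)).
  A tau x d real matrix is a function int => 'd => real which is zero for rows
  outside {0..<tau} (rows are int-indexed to allow the head shift i + delta3).\<close>

type_synonym 'd tmat = "int \<Rightarrow> 'd \<Rightarrow> real"

definition sym :: "bool \<Rightarrow> real" where
  "sym b = (if b then 1 else -1)"

definition symv :: "('d::finite \<Rightarrow> bool) \<Rightarrow> real^'d" where
  "symv t = (\<chi> j. sym (t j))"

definition move :: "bool \<Rightarrow> int" where
  "move b = (if b then 1 else -1)"

definition inr :: "nat \<Rightarrow> int \<Rightarrow> bool" where
  "inr tau i \<longleftrightarrow> 0 \<le> i \<and> i < int tau"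

definition mat_at :: "nat \<Rightarrow> 'd tmat \<Rightarrow> int \<Rightarrow> 'd \<Rightarrow> real" where
  "mat_at tau M i j = (if inr tau i then M i j else 0)"

definition diagTH :: "nat \<Rightarrow> 'd::finite tmat \<Rightarrow> 'd tmat \<Rightarrow> real^'d" where
  "diagTH tau T H = (\<chi> j. \<Sum>i\<in>{0..<int tau}. T i j * H i j)"

definition fro2 :: "nat \<Rightarrow> 'd::finite tmat \<Rightarrow> real" where
  "fro2 tau M = (\<Sum>i\<in>{0..<int tau}. \<Sum>j\<in>UNIV. (M i j)^2)"

definition shift_e :: "nat \<Rightarrow> ('q \<Rightarrow> ('d \<Rightarrow> bool) \<Rightarrow> ('d \<Rightarrow> bool))
    \<Rightarrow> 'q \<times> ('d \<Rightarrow> bool) \<Rightarrow> 'd tmat \<Rightarrow> 'd tmat" where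
  "shift_e tau \<delta>3 v H =
     (\<lambda>i j. if inr tau i then mat_at tau H (i + move (\<delta>3 (fst v) (snd v) j)) j else 0)"

definition shiftS :: "nat \<Rightarrow> ('q::finite \<Rightarrow> ('d::finite \<Rightarrow> bool) \<Rightarrow> ('d \<Rightarrow> bool))
    \<Rightarrow> real^('q \<times> ('d \<Rightarrow> bool)) \<Rightarrow> 'd tmat \<Rightarrow> 'd tmat" where
  "shiftS tau \<delta>3 x H = (\<lambda>i j. \<Sum>v\<in>UNIV. x$v * shift_e tau \<delta>3 v H i j)"

definition valid_config :: "nat \<Rightarrow> 'd tmat \<Rightarrow> 'd tmat \<Rightarrow> bool" where
  "valid_config tau T H \<longleftrightarrow>
     (\<forall>i j. \<not> inr tau i \<longrightarrow> T i j = 0 \<and> H i j = 0) \<and>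
     (\<forall>i j. inr tau i \<longrightarrow> T i j \<in> {-1, 1} \<and> H i j \<in> {0, 1}) \<and>
     (\<forall>j. \<exists>!i. inr tau i \<and> H i j = 1)"

definition heads_interior :: "nat \<Rightarrow> 'd tmat \<Rightarrow> bool" where
  "heads_interior tau H \<longleftrightarrow> (\<forall>i j. H i j = 1 \<longrightarrow> 0 < i \<and> i < int tau - 1)"

definition readsym :: "nat \<Rightarrow> 'd::finite tmat \<Rightarrow> 'd tmat \<Rightarrow> ('d \<Rightarrow> bool)" where
  "readsym tau T H = (\<lambda>j. diagTH tau T H $ j = 1)"

definition tm_step :: "nat \<Rightarrow> 'd set \<Rightarrow> ('q \<Rightarrow> ('d::finite \<Rightarrow> bool) \<Rightarrow> 'q)
    \<Rightarrow> ('q \<Rightarrow> ('d \<Rightarrow> bool) \<Rightarrow> ('d \<Rightarrow> bool)) \<Rightarrow> ('q \<Rightarrow> ('d \<Rightarrow> bool) \<Rightarrow> ('d \<Rightarrow> bool))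
    \<Rightarrow> 'q \<times> 'd tmat \<times> 'd tmat \<Rightarrow> 'q \<times> 'd tmat \<times> 'd tmat" where
  "tm_step tau RO \<delta>1 \<delta>2 \<delta>3 cfg =
     (case cfg of (q, T, H) \<Rightarrow>
        (let t = readsym tau T H in
          (\<delta>1 q t,
           (\<lambda>i j. if j \<in> RO then T i j else T i j + H i j * (sym (\<delta>2 q t j) - sym (t j))),
           shift_e tau \<delta>3 (q, t) H)))"

definition ev :: "'v::finite \<Rightarrow> real^'v" where
  "ev v = axis v 1"

definition simplexS :: "(real^'v::finite) set" where
  "simplexS = convex hull (range ev)"

definition evw :: "'v::finite \<Rightarrow> 'v \<Rightarrow> real \<Rightarrow> real^'v" where
  "evw v w \<mu> = (1 - \<mu>) *\<^sub>R ev v + \<mu> *\<^sub>R ev w"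

definition corner :: "'v::finite \<Rightarrow> real \<Rightarrow> (real^'v) set" where
  "corner v \<mu> = convex hull (insert (ev v) {evw v w \<mu> | w. w \<noteq> v})"

definition affine_on :: "(real^'v::finite) set \<Rightarrow> (real^'v \<Rightarrow> real) \<Rightarrow> bool" where
  "affine_on C f \<longleftrightarrow> (\<exists>a c. \<forall>x\<in>C. f x = a \<bullet> x + c)"

definition edges :: "('q \<Rightarrow> ('d \<Rightarrow> bool) \<Rightarrow> 'q) \<Rightarrow> (('q \<times> ('d \<Rightarrow> bool)) \<times> ('q \<times> ('d \<Rightarrow> bool))) set" where
  "edges \<delta>1 = {(v, w). fst w = \<delta>1 (fst v) (snd v)}"

definition wv :: "'q set \<Rightarrow> real \<Rightarrow> real \<Rightarrow> 'q \<times> ('d \<Rightarrow> bool) \<Rightarrow> real" where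
  "wv F b \<gamma> v = (if fst v \<in> F then - (b^3 * \<gamma>) else 0)"

definition wvw :: "real \<Rightarrow> real \<Rightarrow> 'q \<times> ('d::finite \<Rightarrow> bool) \<Rightarrow> 'q \<times> ('d \<Rightarrow> bool) \<Rightarrow> real" where
  "wvw b \<gamma> v w = - (b^3 + b * real (card {i. snd w i = snd v i})) * \<gamma>"

definition lS_ok :: "'q set \<Rightarrow> ('q \<Rightarrow> ('d::finite \<Rightarrow> bool) \<Rightarrow> 'q) \<Rightarrow> real \<Rightarrow> real
    \<Rightarrow> (real^('q::finite \<times> ('d \<Rightarrow> bool)) \<Rightarrow> real) \<Rightarrow> bool" where
  "lS_ok F \<delta>1 b \<gamma> lS \<longleftrightarrow>
     (\<forall>v. affine_on (corner v (1/4)) lS) \<and>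
     (\<forall>v. lS (ev v) = wv F b \<gamma> v) \<and>
     (\<forall>v w. (v, w) \<in> edges \<delta>1 \<longrightarrow>
        lS (evw v w (1/4)) = wvw b \<gamma> v w \<and> lS (evw v w (3/4)) = wvw b \<gamma> v w / 2) \<and>
     (\<forall>v w. v \<noteq> w \<and> (v, w) \<notin> edges \<delta>1 \<and> (w, v) \<notin> edges \<delta>1 \<longrightarrow>
        lS (evw v w (1/4)) = 0 \<and> lS (evw v w (3/4)) = 0)"

definition Tdown :: "real^('q::finite \<times> ('d::finite \<Rightarrow> bool)) \<Rightarrow> real^'d" where
  "Tdown x = (\<Sum>v\<in>UNIV. x$v *\<^sub>R symv (snd v))"

definition Tcurv :: "('q::finite \<Rightarrow> ('d::finite \<Rightarrow> bool) \<Rightarrow> ('d \<Rightarrow> bool))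
    \<Rightarrow> real^('q \<times> ('d \<Rightarrow> bool)) \<Rightarrow> real^'d" where
  "Tcurv \<delta>2 x = (\<Sum>v\<in>UNIV. x$v *\<^sub>R symv (\<delta>2 (fst v) (snd v)))"

definition loss :: "nat \<Rightarrow> ('q::finite \<Rightarrow> ('d::finite \<Rightarrow> bool) \<Rightarrow> ('d \<Rightarrow> bool))
    \<Rightarrow> ('q \<Rightarrow> ('d \<Rightarrow> bool) \<Rightarrow> ('d \<Rightarrow> bool)) \<Rightarrow> real \<Rightarrow> real \<Rightarrow> real
    \<Rightarrow> (real^('q \<times> ('d \<Rightarrow> bool)) \<Rightarrow> real)
    \<Rightarrow> real^('q \<times> ('d \<Rightarrow> bool)) \<Rightarrow> 'd tmat \<Rightarrow> 'd tmat \<Rightarrow> real" where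
  "loss tau \<delta>2 \<delta>3 \<gamma> b c lS x T H =
     c + lS x
     + 1/2 * \<gamma> * (norm (diagTH tau T H - Tcurv \<delta>2 x))^2
     + 2 * b^2 * \<gamma> * (norm (diagTH tau T (shiftS tau \<delta>3 x H) - Tdown x))^2
     + 1/2 * \<gamma> * fro2 tau (\<lambda>i j. shiftS tau \<delta>3 x H i j - H i j)"

definition has_dirderiv :: "('a::real_vector \<Rightarrow> real) \<Rightarrow> 'a \<Rightarrow> 'a \<Rightarrow> real \<Rightarrow> bool" where
  "has_dirderiv f x u L \<longleftrightarrow> ((\<lambda>h. (f (x + h *\<^sub>R u) - f x) / h) \<longlongrightarrow> L) (at_right 0)"

definition dirderiv :: "('a::real_vector \<Rightarrow> real) \<Rightarrow> 'a \<Rightarrow> 'a \<Rightarrow> real" where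
  "dirderiv f x u = Lim (at_right 0) (\<lambda>h. (f (x + h *\<^sub>R u) - f x) / h)"

definition mgrad :: "nat \<Rightarrow> ('d tmat \<Rightarrow> real) \<Rightarrow> 'd tmat \<Rightarrow> 'd tmat" where
  "mgrad tau f M = (\<lambda>i j. if inr tau i then deriv (\<lambda>s. f (M(i := (M i)(j := s)))) (M i j) else 0)"

text \<open>one step of the stop-gradient iteration, from (x,T,H) to (x',T',H');
  the direction minimiser is required to exist and to be unique\<close>
definition iter_step :: "nat \<Rightarrow> 'd set \<Rightarrow> ('q::finite \<Rightarrow> ('d::finite \<Rightarrow> bool) \<Rightarrow> ('d \<Rightarrow> bool))
    \<Rightarrow> ('q \<Rightarrow> ('d \<Rightarrow> bool) \<Rightarrow> ('d \<Rightarrow> bool)) \<Rightarrow> real \<Rightarrow> real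
    \<Rightarrow> (real^('q \<times> ('d \<Rightarrow> bool)) \<Rightarrow> real)
    \<Rightarrow> real^('q \<times> ('d \<Rightarrow> bool)) \<Rightarrow> 'd tmat \<Rightarrow> 'd tmat
    \<Rightarrow> real^('q \<times> ('d \<Rightarrow> bool)) \<Rightarrow> 'd tmat \<Rightarrow> 'd tmat \<Rightarrow> bool" where
  "iter_step tau RO \<delta>2 \<delta>3 \<gamma> b lS x T H x' T' H' \<longleftrightarrow>
     (let r = diagTH tau T (shiftS tau \<delta>3 x H);
          \<Phi> = (\<lambda>y. lS y + 2 * b^2 * \<gamma> * (norm (r - Tdown y))^2);
          fT = (\<lambda>T0. 1/2 * \<gamma> * (norm (diagTH tau T0 H - Tcurv \<delta>2 x))^2);
          G = (\<lambda>i j. if j \<in> RO then 0 else mgrad tau fT T i j);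
          P = shiftS tau \<delta>3 x H;
          fH = (\<lambda>H0. 1/2 * \<gamma> * fro2 tau (\<lambda>i j. P i j - H0 i j))
      in (\<forall>y\<in>simplexS. \<exists>L. has_dirderiv \<Phi> x (y - x) L)
         \<and> x' \<in> simplexS
         \<and> (\<forall>y\<in>simplexS. y \<noteq> x' \<longrightarrow> dirderiv \<Phi> x (x' - x) < dirderiv \<Phi> x (y - x))
         \<and> T' = (\<lambda>i j. T i j - (1/\<gamma>) * G i j)
         \<and> H' = (\<lambda>i j. H i j - (1/\<gamma>) * mgrad tau fH H i j))"

end

theory Submission
  imports Defs
begin

text \<open>Along the computation, \<open>x\<^sub>k = ev v\<close> is a vertex of the simplex, \<open>v = (q\<^sub>k, t\<^sub>k)\<close>, and
  \<open>lS\<close> is affine on the corner of the simplex at \<open>ev v\<close>. Hence the one-sided derivative of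
  \<open>\<Phi>\<^sub>k\<close> at \<open>ev v\<close> in direction \<open>y - ev v\<close> is linear in \<open>y\<close>, namely \<open>\<Sum>\<^sub>w y\<^sub>w D w\<close> with
  \<open>D w = 4 lS (evw v w (1/4)) - 16 b\<^sup>2 \<gamma> #{j. s j \<noteq> t j \<and> t' j \<noteq> t j}\<close>, where \<open>s\<close> are the
  symbols under the shifted heads and \<open>t'\<close> those of \<open>w\<close>; its unique minimiser over the
  simplex is the vertex of least \<open>D\<close>. An edge \<open>(v, w)\<close> of the transition graph carries the
  weight \<open>-(b\<^sup>3 + b #{j. t' j = t j}) \<gamma>\<close>: its \<open>b\<^sup>3\<close> part outweighs the quadratic term since
  \<open>b > 4 d\<close>, and among the successors \<open>w = (\<delta>1 q t, t')\<close> its agreement part together with the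
  mismatch term singles out \<open>t' = s\<close>, so \<open>D\<close> is least exactly at \<open>v\<^sub>k\<^sub>+\<^sub>1 = (\<delta>1 q t, s)\<close>.
  As \<open>H\<^sub>k\<close> is an indicator matrix, a gradient step of size \<open>1/\<gamma>\<close> on the tape term writes
  \<open>\<delta>2 q t\<close> under the heads, and one on the head term moves the heads to \<open>S(x\<^sub>k) H\<^sub>k\<close>.
  At a vertex the loss is \<open>c + \<omega>\<^sub>v\<close> plus \<open>2 \<gamma>\<close> per rewritten symbol, \<open>8 b\<^sup>2 \<gamma>\<close> per
  mismatch between \<open>t\<close> and \<open>s\<close>, and \<open>\<gamma> d\<close> for the head move, which gives the bounds.\<close>

section \<open>Symbol vectors and head matrices\<close>

lemma symv_diff_inner:
  "(symv s - symv t) \<bullet> (symv u - symv t) = 4 * real (card {j. s j \<noteq> t j \<and> u j \<noteq> t j})"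
proof -
  have "(symv s - symv t) \<bullet> (symv u - symv t) = (\<Sum>j\<in>UNIV. if s j \<noteq> t j \<and> u j \<noteq> t j then 4 else 0)"
    unfolding inner_vec_def symv_def by (rule sum.cong) (auto simp: sym_def)
  then show ?thesis
    by (simp add: sum.If_cases)
qed

lemma symv_diff_norm2: "(norm (symv s - symv t))\<^sup>2 = 4 * real (card {j. s j \<noteq> t j})"
  using symv_diff_inner[of s t s] by (simp add: power2_norm_eq_inner)

definition head_matrix :: "('d \<Rightarrow> int) \<Rightarrow> 'd tmat" where
  "head_matrix h = (\<lambda>i j. if i = h j then 1 else 0)"

lemma valid_configE:
  assumes "valid_config tau T H" and "heads_interior tau H"
  obtains h where "H = head_matrix h" and "\<And>j. 0 < h j \<and> h j < int tau - 1"
    and "\<And>i j. inr tau i \<Longrightarrow> T i j = 1 \<or> T i j = -1"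
proof -
  have outside: "\<And>i j. \<not> inr tau i \<Longrightarrow> H i j = 0"
    using assms(1) unfolding valid_config_def by simp
  have inside: "\<And>i j. inr tau i \<Longrightarrow> T i j \<in> {-1, 1} \<and> H i j \<in> {0, 1}"
    using assms(1) unfolding valid_config_def by simp
  have unique: "\<And>j. \<exists>!i. inr tau i \<and> H i j = 1"
    using assms(1) unfolding valid_config_def by simp
  define h where "h j = (THE i. inr tau i \<and> H i j = 1)" for j
  have head: "inr tau (h j) \<and> H (h j) j = 1" for j
    unfolding h_def using unique by (rule theI')
  have head_unique: "i = h j" if "inr tau i" and "H i j = 1" for i j
    unfolding h_def by (rule the1_equality[OF unique, symmetric]) (use that in blast)
  have "H i j = (if i = h j then 1 else 0)" for i j
  proof (cases "inr tau i")
    case True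
    then have "H i j = 0 \<or> H i j = 1"
      using inside by blast
    moreover have "H i j \<noteq> 1" if "i \<noteq> h j"
      using head_unique[OF True] that by blast
    ultimately show ?thesis
      using head[of j] by auto
  next
    case False
    with outside[OF False, of j] head[of j] show ?thesis
      by auto
  qed
  then have "H = head_matrix h"
    by (auto simp: head_matrix_def)
  moreover have "0 < h j \<and> h j < int tau - 1" for j
    using assms(2) head unfolding heads_interior_def by blast
  moreover have "T i j = 1 \<or> T i j = -1" if "inr tau i" for i j
    using inside[OF that, of j] by auto
  ultimately show ?thesis
    using that by blast
qed

lemma diagTH_head_matrix:
  assumes "inr tau (h j)"
  shows "diagTH tau M (head_matrix h) $ j = M (h j) j"
proof -
  have "diagTH tau M (head_matrix h) $ j = (\<Sum>i\<in>{0..<int tau}. if i = h j then M i j else 0)"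
    unfolding diagTH_def head_matrix_def by (simp add: if_distrib cong: if_cong)
  also have "\<dots> = M (h j) j"
    using assms by (simp add: inr_def)
  finally show ?thesis .
qed

lemma symv_readsym_head_matrix:
  assumes "\<And>j. inr tau (h j)" and "\<And>i j. inr tau i \<Longrightarrow> T i j = 1 \<or> T i j = -1"
  shows "symv (readsym tau T (head_matrix h)) = diagTH tau T (head_matrix h)"
  unfolding vec_eq_iff
proof
  fix j
  from assms(2)[OF assms(1)[of j], of j] assms(1)[of j]
  show "symv (readsym tau T (head_matrix h)) $ j = diagTH tau T (head_matrix h) $ j"
    by (auto simp: symv_def readsym_def sym_def diagTH_head_matrix)
qed

lemma interior_head_shift:
  assumes "0 < i \<and> i < int tau - 1"
  shows "inr tau i" and "inr tau (i - move m)" and "i - move m \<noteq> i"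
  using assms by (auto simp: inr_def move_def)

lemma shift_e_head_matrix:
  assumes "\<And>j. 0 < h j \<and> h j < int tau - 1"
  shows "shift_e tau \<delta>3 v (head_matrix h) = head_matrix (\<lambda>j. h j - move (\<delta>3 (fst v) (snd v) j))"
proof (intro ext)
  fix i j
  define m where "m = move (\<delta>3 (fst v) (snd v) j)"
  have "inr tau (h j - m)" and "inr tau (h j)"
    unfolding m_def using interior_head_shift[OF assms] by blast+
  show "shift_e tau \<delta>3 v (head_matrix h) i j = head_matrix (\<lambda>j. h j - move (\<delta>3 (fst v) (snd v) j)) i j"
  proof (cases "i = h j - m")
    case True
    with \<open>inr tau (h j - m)\<close> \<open>inr tau (h j)\<close> show ?thesis
      unfolding shift_e_def mat_at_def head_matrix_def m_def[symmetric] by simp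
  next
    case False
    then have "i + m \<noteq> h j"
      by linarith
    with False show ?thesis
      unfolding shift_e_def mat_at_def head_matrix_def m_def[symmetric] by simp
  qed
qed

lemma valid_config_shiftE:
  assumes "valid_config tau T H" and "heads_interior tau H"
  obtains h h' where "H = head_matrix h" and "shift_e tau \<delta>3 v H = head_matrix h'"
    and "\<And>j. inr tau (h j)" and "\<And>j. inr tau (h' j)" and "\<And>j. h' j \<noteq> h j"
    and "\<And>i j. inr tau i \<Longrightarrow> T i j = 1 \<or> T i j = -1"
proof -
  obtain h where H: "H = head_matrix h" and interior: "\<And>j. 0 < h j \<and> h j < int tau - 1"
    and "\<And>i j. inr tau i \<Longrightarrow> T i j = 1 \<or> T i j = -1"
    using valid_configE[OF assms] by blast
  moreover have "shift_e tau \<delta>3 v H = head_matrix (\<lambda>j. h j - move (\<delta>3 (fst v) (snd v) j))"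
    unfolding H using interior by (rule shift_e_head_matrix)
  ultimately show ?thesis
    using that interior_head_shift[OF interior] by blast
qed

lemma fro2_head_matrix_diff:
  fixes h h' :: "'d::finite \<Rightarrow> int"
  assumes "\<And>j. inr tau (h j)" and "\<And>j. inr tau (h' j)" and "\<And>j. h' j \<noteq> h j"
  shows "fro2 tau (\<lambda>i j. head_matrix h' i j - head_matrix h i j) = 2 * real CARD('d)"
proof -
  have "fro2 tau (\<lambda>i j. head_matrix h' i j - head_matrix h i j)
      = (\<Sum>j\<in>UNIV. \<Sum>i\<in>{0..<int tau}. (head_matrix h' i j - head_matrix h i j)\<^sup>2)"
    unfolding fro2_def by (rule sum.swap)
  also have "\<dots> = (\<Sum>j\<in>(UNIV::'d set).
      \<Sum>i\<in>{0..<int tau}. (if i = h' j then 1 else 0) + (if i = h j then 1 else 0))"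
  proof (intro sum.cong refl)
    fix i j
    show "(head_matrix h' i j - head_matrix h i j)\<^sup>2 = (if i = h' j then 1 else 0) + (if i = h j then (1::real) else 0)"
      using assms(3)[of j] by (simp add: head_matrix_def)
  qed
  also have "\<dots> = (\<Sum>j\<in>(UNIV::'d set). 2)"
  proof (rule sum.cong[OF refl])
    fix j
    have "h' j \<in> {0..<int tau}" "h j \<in> {0..<int tau}"
      using assms(1,2)[of j] by (auto simp: inr_def)
    then show "(\<Sum>i\<in>{0..<int tau}. (if i = h' j then 1 else 0) + (if i = h j then 1 else 0)) = (2::real)"
      by (simp add: sum.distrib)
  qed
  finally show ?thesis
    by simp
qed

section \<open>The loss at a vertex of the simplex\<close>

lemma ev_nth: "ev v $ w = (if w = v then 1 else 0)"
  by (simp add: ev_def axis_def)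

lemma shiftS_ev: "shiftS tau \<delta>3 (ev v) H = shift_e tau \<delta>3 v H"
  unfolding shiftS_def ev_nth by (simp add: if_distrib[of "\<lambda>c. c * _"] cong: if_cong)

lemma Tdown_ev: "Tdown (ev v) = symv (snd v)"
  unfolding Tdown_def ev_nth by (simp add: if_distrib[of "\<lambda>c. c *\<^sub>R _"] cong: if_cong)

lemma Tcurv_ev: "Tcurv \<delta>2 (ev v) = symv (\<delta>2 (fst v) (snd v))"
  unfolding Tcurv_def ev_nth by (simp add: if_distrib[of "\<lambda>c. c *\<^sub>R _"] cong: if_cong)

lemma loss_at_vertex:
  fixes T H :: "'d::finite tmat" and q :: "'q::finite" and \<delta>3 :: "'q \<Rightarrow> ('d \<Rightarrow> bool) \<Rightarrow> 'd \<Rightarrow> bool"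
  assumes "valid_config tau T H" and "heads_interior tau H"
  defines "t \<equiv> readsym tau T H"
  defines "s \<equiv> readsym tau T (shift_e tau \<delta>3 (q, t) H)"
  shows "loss tau \<delta>2 \<delta>3 \<gamma> b c lS (ev (q, t)) T H
    = c + lS (ev (q, t)) + 2 * \<gamma> * real (card {j. t j \<noteq> \<delta>2 q t j})
      + 8 * b\<^sup>2 * \<gamma> * real (card {j. s j \<noteq> t j}) + \<gamma> * real CARD('d)"
proof -
  obtain h h' where H: "H = head_matrix h" and H': "shift_e tau \<delta>3 (q, t) H = head_matrix h'"
    and heads: "\<And>j. inr tau (h j)" "\<And>j. inr tau (h' j)" "\<And>j. h' j \<noteq> h j"
    and T: "\<And>i j. inr tau i \<Longrightarrow> T i j = 1 \<or> T i j = -1"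
    using valid_config_shiftE[OF assms(1,2)] by blast
  have "symv t = diagTH tau T H"
    unfolding t_def H by (rule symv_readsym_head_matrix[OF heads(1) T])
  moreover have "symv s = diagTH tau T (shift_e tau \<delta>3 (q, t) H)"
    unfolding s_def H' by (rule symv_readsym_head_matrix[OF heads(2) T])
  moreover have "fro2 tau (\<lambda>i j. shift_e tau \<delta>3 (q, t) H i j - H i j) = 2 * real CARD('d)"
    unfolding H' unfolding H by (rule fro2_head_matrix_diff[OF heads])
  ultimately have "loss tau \<delta>2 \<delta>3 \<gamma> b c lS (ev (q, t)) T H
      = c + lS (ev (q, t)) + 1/2 * \<gamma> * (norm (symv t - symv (\<delta>2 q t)))\<^sup>2
        + 2 * b\<^sup>2 * \<gamma> * (norm (symv s - symv t))\<^sup>2 + 1/2 * \<gamma> * (2 * real CARD('d))"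
    unfolding loss_def shiftS_ev Tcurv_ev Tdown_ev by simp
  then show ?thesis
    unfolding symv_diff_norm2 by simp
qed

lemma loss_at_vertex_bounds:
  fixes T H :: "'d::finite tmat" and q :: "'q::finite"
  assumes "valid_config tau T H" and "heads_interior tau H" and "0 < \<gamma>"
  defines "x \<equiv> ev (q, readsym tau T H)"
  shows "c + lS x \<le> loss tau \<delta>2 \<delta>3 \<gamma> b c lS x T H"
    and "loss tau \<delta>2 \<delta>3 \<gamma> b c lS x T H
      \<le> c + lS x + 8 * b\<^sup>2 * real CARD('d) * \<gamma> + 3 * real CARD('d) * \<gamma>"
proof -
  define d where "d = real CARD('d)"
  define t where "t = readsym tau T H"
  define n1 where "n1 = real (card {j. t j \<noteq> \<delta>2 q t j})"
  define n2 where "n2 = real (card {j. readsym tau T (shift_e tau \<delta>3 (q, t) H) j \<noteq> t j})"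
  have loss: "loss tau \<delta>2 \<delta>3 \<gamma> b c lS x T H = c + lS x + 2 * \<gamma> * n1 + 8 * b\<^sup>2 * \<gamma> * n2 + \<gamma> * d"
    unfolding x_def n1_def n2_def t_def d_def by (rule loss_at_vertex[OF assms(1,2)])
  have card_le: "card {j::'d. P j} \<le> CARD('d)" for P
    by (rule card_mono) auto
  have n: "0 \<le> n1" "n1 \<le> d" "0 \<le> n2" "n2 \<le> d"
    unfolding n1_def n2_def d_def using card_le by simp_all
  have "2 * \<gamma> * n1 + 8 * b\<^sup>2 * \<gamma> * n2 + \<gamma> * d \<le> 2 * \<gamma> * d + 8 * b\<^sup>2 * \<gamma> * d + \<gamma> * d"
    using n assms(3) by (intro add_mono mult_left_mono) simp_all
  also have "\<dots> = 8 * b\<^sup>2 * d * \<gamma> + 3 * d * \<gamma>"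
    by (simp add: algebra_simps)
  finally show "loss tau \<delta>2 \<delta>3 \<gamma> b c lS x T H \<le> c + lS x + 8 * b\<^sup>2 * d * \<gamma> + 3 * d * \<gamma>"
    unfolding loss by simp
  show "c + lS x \<le> loss tau \<delta>2 \<delta>3 \<gamma> b c lS x T H"
    unfolding loss using n assms(3) by simp
qed

section \<open>Directional derivatives at a vertex of the simplex\<close>

lemma simplexS_coordinates:
  assumes "y \<in> simplexS"
  shows "\<And>w. 0 \<le> y $ w" and "(\<Sum>w\<in>UNIV. y $ w) = 1"
proof -
  let ?C = "{y::real^'v. (\<forall>w. 0 \<le> y $ w) \<and> (\<Sum>w\<in>UNIV. y $ w) = 1}"
  have "convex ?C"
    by (auto simp: convex_def sum.distrib sum_distrib_left[symmetric])
  moreover have "range ev \<subseteq> ?C"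
    by (auto simp: ev_nth)
  ultimately have "simplexS \<subseteq> ?C"
    unfolding simplexS_def by (rule hull_minimal[rotated])
  with assms show "\<And>w. 0 \<le> y $ w" and "(\<Sum>w\<in>UNIV. y $ w) = 1"
    by blast+
qed

lemma ev_in_simplexS: "ev v \<in> simplexS"
  unfolding simplexS_def by (rule hull_inc) simp

lemma ev_in_corner: "ev v \<in> corner v \<mu>"
  unfolding corner_def by (rule hull_inc) simp

lemma evw_in_corner: "evw v w \<mu> \<in> corner v \<mu>"
proof (cases "w = v")
  case True
  then show ?thesis
    using ev_in_corner by (simp add: evw_def algebra_simps flip: scaleR_add_left)
next
  case False
  then show ?thesis
    unfolding corner_def by (intro hull_inc) blast
qed

lemma vertex_segment_in_corner:
  assumes "y \<in> simplexS" and "0 < \<mu>" and "0 \<le> h" and "h \<le> \<mu>"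
  shows "ev v + h *\<^sub>R (y - ev v) \<in> corner v \<mu>"
proof -
  have convex: "convex (corner v \<mu>)"
    unfolding corner_def by (rule convex_convex_hull)
  define p where "p w = ev v + h *\<^sub>R (ev w - ev v)" for w
  have "p w = (1 - h / \<mu>) *\<^sub>R ev v + (h / \<mu>) *\<^sub>R evw v w \<mu>" for w
    unfolding p_def evw_def using assms(2) by (simp add: algebra_simps)
  then have p_in: "p w \<in> corner v \<mu>" for w
    using assms(2-4) by (auto intro!: convexD[OF convex ev_in_corner evw_in_corner])
  have "(\<Sum>w\<in>UNIV. y $ w *\<^sub>R p w) \<in> corner v \<mu>"
    using simplexS_coordinates[OF assms(1)] p_in by (intro convex_sum[OF finite convex]) auto
  moreover have "(\<Sum>w\<in>UNIV. y $ w *\<^sub>R p w) = ev v + h *\<^sub>R (y - ev v)"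
    using simplexS_coordinates(2)[OF assms(1)]
    by (simp add: p_def vec_eq_iff ev_nth sum.distrib scaleR_add_right scaleR_diff_right
        sum_subtractf sum_distrib_left[symmetric] if_distrib[of "\<lambda>c. _ * c"] algebra_simps cong: if_cong)
  ultimately show ?thesis
    by simp
qed

lemma simplexS_minus_vertex:
  assumes "y \<in> simplexS"
  shows "y - ev v = (\<Sum>w\<in>UNIV. y $ w *\<^sub>R (ev w - ev v))"
  using simplexS_coordinates(2)[OF assms]
  by (simp add: vec_eq_iff ev_nth right_diff_distrib sum_subtractf
      if_distrib[of "\<lambda>c. _ * c"] cong: if_cong)

lemma linear_Tdown: "linear Tdown"
  by (rule linearI) (simp_all add: Tdown_def scaleR_add_left sum.distrib scaleR_sum_right)

lemma has_dirderiv_quadratic_expansion: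
  fixes f :: "'a::real_vector \<Rightarrow> real"
  assumes "0 < e" and "\<And>h. 0 < h \<Longrightarrow> h < e \<Longrightarrow> f (x + h *\<^sub>R u) = f x + h * L + h\<^sup>2 * C"
  shows "has_dirderiv f x u L"
proof -
  have "((\<lambda>h. L + h * C) \<longlongrightarrow> L) (at_right 0)"
    by (auto intro!: tendsto_eq_intros)
  moreover have "\<forall>\<^sub>F h in at_right 0. L + h * C = (f (x + h *\<^sub>R u) - f x) / h"
    unfolding eventually_at_right_field using assms
    by (auto intro!: exI[of _ e] simp: power2_eq_square field_simps)
  ultimately show ?thesis
    unfolding has_dirderiv_def by (rule Lim_transform_eventually)
qed

lemma dirderiv_eq: "has_dirderiv f x u L \<Longrightarrow> dirderiv f x u = L"
  unfolding has_dirderiv_def dirderiv_def by (rule tendsto_Lim[OF trivial_limit_at_right_real])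

lemma has_dirderiv_at_vertex:
  fixes lS :: "real^('q::finite \<times> ('d::finite \<Rightarrow> bool)) \<Rightarrow> real" and r :: "real^'d"
  assumes "affine_on (corner v (1/4)) lS" and "y \<in> simplexS"
  shows "has_dirderiv (\<lambda>z. lS z + \<kappa> * (norm (r - Tdown z))\<^sup>2) (ev v) (y - ev v)
    (\<Sum>w\<in>UNIV. y $ w * (4 * (lS (evw v w (1/4)) - lS (ev v))
        - 2 * \<kappa> * ((r - symv (snd v)) \<bullet> (symv (snd w) - symv (snd v)))))"
proof -
  obtain a c0 where affine: "\<And>z. z \<in> corner v (1/4) \<Longrightarrow> lS z = a \<bullet> z + c0"
    using assms(1) unfolding affine_on_def by blast
  define u where "u = y - ev v"
  define p where "p = r - symv (snd v)"
  define L where "L z = a \<bullet> z - 2 * \<kappa> * (p \<bullet> Tdown z)" for z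
  have linear_L: "linear L"
    unfolding L_def by (rule linearI)
      (simp_all add: linear_add[OF linear_Tdown] linear_scale[OF linear_Tdown] inner_add_right algebra_simps)
  have "has_dirderiv (\<lambda>z. lS z + \<kappa> * (norm (r - Tdown z))\<^sup>2) (ev v) u (L u)"
  proof (rule has_dirderiv_quadratic_expansion)
    fix h :: real
    assume h: "0 < h" "h < 1/4"
    have lS_segment: "lS (ev v + h *\<^sub>R u) = lS (ev v) + h * (a \<bullet> u)"
      using affine[OF vertex_segment_in_corner[OF assms(2), of "1/4" h v]] affine[OF ev_in_corner] h
      unfolding u_def by (simp add: inner_add_right)
    have residual: "r - Tdown (ev v + h *\<^sub>R u) = p - h *\<^sub>R Tdown u" "r - Tdown (ev v) = p"
      unfolding p_def by (simp_all add: linear_add[OF linear_Tdown] linear_scale[OF linear_Tdown] Tdown_ev)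
    have expand: "(norm (p - h *\<^sub>R Tdown u))\<^sup>2 = (norm p)\<^sup>2 - 2 * h * (p \<bullet> Tdown u) + h\<^sup>2 * (Tdown u \<bullet> Tdown u)"
      unfolding power2_norm_eq_inner
      by (simp add: inner_diff_left inner_diff_right inner_commute power2_eq_square algebra_simps)
    show "lS (ev v + h *\<^sub>R u) + \<kappa> * (norm (r - Tdown (ev v + h *\<^sub>R u)))\<^sup>2
        = lS (ev v) + \<kappa> * (norm (r - Tdown (ev v)))\<^sup>2 + h * L u + h\<^sup>2 * (\<kappa> * (Tdown u \<bullet> Tdown u))"
      unfolding L_def lS_segment residual expand by (simp add: algebra_simps)
  qed simp
  moreover have "L u = (\<Sum>w\<in>UNIV. y $ w * L (ev w - ev v))"
    unfolding u_def simplexS_minus_vertex[OF assms(2), of v]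
    by (simp add: linear_sum[OF linear_L] linear_scale[OF linear_L])
  moreover have "L (ev w - ev v) = 4 * (lS (evw v w (1/4)) - lS (ev v))
      - 2 * \<kappa> * (p \<bullet> (symv (snd w) - symv (snd v)))" for w
  proof -
    have "lS (evw v w (1/4)) - lS (ev v) = a \<bullet> (evw v w (1/4) - ev v)"
      using affine[OF evw_in_corner] affine[OF ev_in_corner] by (simp add: inner_diff_right)
    also have "evw v w (1/4) - ev v = (1/4) *\<^sub>R (ev w - ev v)"
      by (simp add: evw_def vec_eq_iff algebra_simps)
    finally show ?thesis
      unfolding L_def by (simp add: linear_diff[OF linear_Tdown] Tdown_ev)
  qed
  ultimately show ?thesis
    unfolding u_def p_def by simp
qed

lemma simplexS_weighted_sum_gt:
  fixes D :: "'v::finite \<Rightarrow> real"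
  assumes y: "y \<in> simplexS" and "y \<noteq> ev w0" and less: "\<And>w. w \<noteq> w0 \<Longrightarrow> D w0 < D w"
  shows "D w0 < (\<Sum>w\<in>UNIV. y $ w * D w)"
proof -
  note nonneg = simplexS_coordinates(1)[OF y] and sum1 = simplexS_coordinates(2)[OF y]
  obtain w1 where w1: "w1 \<noteq> w0" "0 < y $ w1"
  proof (rule ccontr)
    assume "\<not> thesis"
    with that nonneg have zero: "y $ w = 0" if "w \<noteq> w0" for w
      using that by (metis order.not_eq_order_implies_strict)
    with sum1 have "y $ w0 = 1"
      by (simp add: sum.remove[of UNIV w0])
    with zero have "y = ev w0"
      by (auto simp: vec_eq_iff ev_nth)
    with \<open>y \<noteq> ev w0\<close> show False ..
  qed
  have "0 < (\<Sum>w\<in>UNIV. y $ w * (D w - D w0))"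
  proof (rule sum_pos2[of UNIV w1])
    show "0 < y $ w1 * (D w1 - D w0)"
      using w1 less[OF w1(1)] by simp
    show "0 \<le> y $ w * (D w - D w0)" for w
      using nonneg[of w] less[of w] by (cases "w = w0") simp_all
  qed simp_all
  also have "(\<Sum>w\<in>UNIV. y $ w * (D w - D w0)) = (\<Sum>w\<in>UNIV. y $ w * D w) - D w0"
    using sum1 by (simp add: right_diff_distrib sum_subtractf flip: sum_distrib_right)
  finally show ?thesis
    by simp
qed

section \<open>The successor vertex is the unique steepest descent direction\<close>

lemma lS_okD:
  assumes "lS_ok F \<delta>1 b \<gamma> lS"
  shows "affine_on (corner v (1/4)) lS"
    and "lS (ev v) = wv F b \<gamma> v"
    and "(v, w) \<in> edges \<delta>1 \<Longrightarrow> lS (evw v w (1/4)) = wvw b \<gamma> v w"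
    and "(v, w) \<in> edges \<delta>1 \<Longrightarrow> lS (evw v w (3/4)) = wvw b \<gamma> v w / 2"
    and "v \<noteq> w \<Longrightarrow> (v, w) \<notin> edges \<delta>1 \<Longrightarrow> (w, v) \<notin> edges \<delta>1 \<Longrightarrow> lS (evw v w (1/4)) = 0"
proof -
  note conditions = assms[unfolded lS_ok_def]
  show "affine_on (corner v (1/4)) lS"
    using conditions[THEN conjunct1] by (rule spec)
  show "lS (ev v) = wv F b \<gamma> v"
    using conditions[THEN conjunct2, THEN conjunct1] by (rule spec)
  show "(v, w) \<in> edges \<delta>1 \<Longrightarrow> lS (evw v w (1/4)) = wvw b \<gamma> v w"
    and "(v, w) \<in> edges \<delta>1 \<Longrightarrow> lS (evw v w (3/4)) = wvw b \<gamma> v w / 2"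
    using conditions[THEN conjunct2, THEN conjunct2, THEN conjunct1] by blast+
  show "v \<noteq> w \<Longrightarrow> (v, w) \<notin> edges \<delta>1 \<Longrightarrow> (w, v) \<notin> edges \<delta>1 \<Longrightarrow> lS (evw v w (1/4)) = 0"
    using conditions[THEN conjunct2, THEN conjunct2, THEN conjunct2] by blast
qed

lemma card_agree_less:
  fixes s t t' :: "'d::finite \<Rightarrow> bool"
  assumes "t' \<noteq> s" and "{j. s j \<noteq> t j} \<subseteq> {j. t' j \<noteq> t j}"
  shows "card {j. t' j = t j} < card {j. s j = t j}"
proof (rule psubset_card_mono)
  obtain j0 where "t' j0 \<noteq> s j0"
    using assms(1) by blast
  with assms(2) have "s j0 = t j0" and "t' j0 \<noteq> t j0"
    by auto
  with assms(2) show "{j. t' j = t j} \<subset> {j. s j = t j}"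
    by auto
qed simp

lemma weighted_agreement_less:
  fixes s t t' :: "'d::finite \<Rightarrow> bool" and b :: real
  assumes "t' \<noteq> s" and "0 < b" and "real CARD('d) < 4 * b"
  shows "b * real (card {j. t' j = t j}) + 4 * b\<^sup>2 * real (card {j. s j \<noteq> t j \<and> t' j \<noteq> t j})
    < b * real (card {j. s j = t j}) + 4 * b\<^sup>2 * real (card {j. s j \<noteq> t j})"
proof (cases "card {j. s j \<noteq> t j \<and> t' j \<noteq> t j} = card {j. s j \<noteq> t j}")
  case True
  then have "{j. s j \<noteq> t j \<and> t' j \<noteq> t j} = {j. s j \<noteq> t j}"
    by (intro card_subset_eq) auto
  then have "card {j. t' j = t j} < card {j. s j = t j}"
    using assms(1) by (intro card_agree_less) auto
  with assms(2) True show ?thesis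
    by simp
next
  case False
  moreover have "card {j. s j \<noteq> t j \<and> t' j \<noteq> t j} \<le> card {j. s j \<noteq> t j}"
    by (rule card_mono) auto
  ultimately have "4 * b\<^sup>2 * (real (card {j. s j \<noteq> t j \<and> t' j \<noteq> t j}) + 1)
      \<le> 4 * b\<^sup>2 * real (card {j. s j \<noteq> t j})"
    by (intro mult_left_mono) auto
  moreover have "b * real (card {j. t' j = t j}) \<le> b * real CARD('d)"
    using assms(2) by (intro mult_left_mono) (auto intro: card_mono)
  moreover have "b * real CARD('d) < b * (4 * b)"
    using assms(2,3) by (intro mult_strict_left_mono)
  moreover have "0 \<le> b * real (card {j. s j = t j})"
    using assms(2) by simp
  ultimately show ?thesis
    by (simp add: power2_eq_square algebra_simps)
qed

lemma lS_quarter_point: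
  assumes lS: "lS_ok F \<delta>1 b \<gamma> lS" and "q \<notin> F"
  shows "((q, t), w) \<in> edges \<delta>1
      \<Longrightarrow> lS (evw (q, t) w (1/4)) = - (b ^ 3 + b * real (card {j. snd w j = t j})) * \<gamma>"
    and "(w, (q, t)) \<in> edges \<delta>1
      \<Longrightarrow> lS (evw (q, t) w (1/4)) = - (b ^ 3 + b * real (card {j. t j = snd w j})) * \<gamma> / 2"
    and "((q, t), w) \<notin> edges \<delta>1 \<Longrightarrow> (w, (q, t)) \<notin> edges \<delta>1 \<Longrightarrow> lS (evw (q, t) w (1/4)) = 0"
proof -
  show "((q, t), w) \<in> edges \<delta>1
      \<Longrightarrow> lS (evw (q, t) w (1/4)) = - (b ^ 3 + b * real (card {j. snd w j = t j})) * \<gamma>"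
    using lS_okD(3)[OF lS] by (simp add: wvw_def)
  have "evw (q, t) w (1/4) = evw w (q, t) (3/4)"
    by (simp add: evw_def vec_eq_iff)
  then show "(w, (q, t)) \<in> edges \<delta>1
      \<Longrightarrow> lS (evw (q, t) w (1/4)) = - (b ^ 3 + b * real (card {j. t j = snd w j})) * \<gamma> / 2"
    using lS_okD(4)[OF lS] by (simp add: wvw_def)
  have "lS (evw (q, t) (q, t) (1/4)) = 0"
    using lS_okD(2)[OF lS] \<open>q \<notin> F\<close> by (simp add: evw_def wv_def flip: scaleR_add_left)
  then show "((q, t), w) \<notin> edges \<delta>1 \<Longrightarrow> (w, (q, t)) \<notin> edges \<delta>1 \<Longrightarrow> lS (evw (q, t) w (1/4)) = 0"
    using lS_okD(5)[OF lS, of "(q, t)" w] by (cases "w = (q, t)") auto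
qed

lemma successor_slope_less:
  fixes t s :: "'d::finite \<Rightarrow> bool"
  assumes lS: "lS_ok F \<delta>1 b \<gamma> lS" and "q \<notin> F" and "0 < \<gamma>" and big: "4 * real CARD('d) < b"
    and "w \<noteq> (\<delta>1 q t, s)"
  shows "4 * lS (evw (q, t) (\<delta>1 q t, s) (1/4)) - 16 * b\<^sup>2 * \<gamma> * real (card {j. s j \<noteq> t j})
    < 4 * lS (evw (q, t) w (1/4)) - 16 * b\<^sup>2 * \<gamma> * real (card {j. s j \<noteq> t j \<and> snd w j \<noteq> t j})"
proof -
  define d where "d = real CARD('d)"
  have "1 \<le> d"
    unfolding d_def using finite_UNIV_card_ge_0[where 'a='d] by simp
  moreover from this big have "4 * b < b * b"
    unfolding d_def[symmetric] by (intro mult_strict_right_mono) auto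
  ultimately have b: "0 < b" "d < b\<^sup>2"
    using big unfolding d_def[symmetric] power2_eq_square by linarith+
  obtain q' t' where w: "w = (q', t')"
    by (cases w)
  define A where "A = real (card {j. s j \<noteq> t j})"
  define n where "n = real (card {j. s j \<noteq> t j \<and> t' j \<noteq> t j})"
  define m where "m = real (card {j. s j = t j})"
  have "n \<le> A"
    unfolding n_def A_def of_nat_le_iff by (rule card_mono) auto
  have "0 \<le> 4 * b * m + 16 * b\<^sup>2 * (A - n)"
    using b \<open>n \<le> A\<close> by (simp add: m_def)
  have successor: "4 * lS (evw (q, t) (\<delta>1 q t, s) (1/4)) = - 4 * (b ^ 3 + b * m) * \<gamma>"
    using lS_quarter_point(1)[OF lS \<open>q \<notin> F\<close>] by (simp add: edges_def m_def)
  have "0 < 4 * lS (evw (q, t) w (1/4)) + 4 * (b ^ 3 + b * m) * \<gamma> + 16 * b\<^sup>2 * \<gamma> * (A - n)"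
  proof (cases "((q, t), w) \<in> edges \<delta>1")
    case True
    then have "t' \<noteq> s"
      using assms(5) unfolding w edges_def by simp
    from weighted_agreement_less[OF this b(1)] big
    have "0 < b * (m - real (card {j. t' j = t j})) + 4 * b\<^sup>2 * (A - n)"
      unfolding m_def A_def n_def by (simp add: algebra_simps)
    moreover have "4 * lS (evw (q, t) w (1/4)) + 4 * (b ^ 3 + b * m) * \<gamma> + 16 * b\<^sup>2 * \<gamma> * (A - n)
        = 4 * \<gamma> * (b * (m - real (card {j. t' j = t j})) + 4 * b\<^sup>2 * (A - n))"
      using lS_quarter_point(1)[OF lS \<open>q \<notin> F\<close> True] unfolding w by (simp add: algebra_simps)
    ultimately show ?thesis
      using \<open>0 < \<gamma>\<close> by simp
  next
    case not_successor: False
    show ?thesis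
    proof (cases "(w, (q, t)) \<in> edges \<delta>1")
      case True
      have "real (card {j. t j = t' j}) \<le> d"
        unfolding d_def by (simp add: card_mono)
      with b have "0 < 2 * b * (b\<^sup>2 - real (card {j. t j = t' j}))"
        by simp
      moreover have "4 * lS (evw (q, t) w (1/4)) + 4 * (b ^ 3 + b * m) * \<gamma> + 16 * b\<^sup>2 * \<gamma> * (A - n)
          = \<gamma> * (2 * b * (b\<^sup>2 - real (card {j. t j = t' j})) + (4 * b * m + 16 * b\<^sup>2 * (A - n)))"
        using lS_quarter_point(2)[OF lS \<open>q \<notin> F\<close> True] unfolding w
        by (simp add: power2_eq_square power3_eq_cube algebra_simps)
      ultimately show ?thesis
        using \<open>0 < \<gamma>\<close> \<open>0 \<le> 4 * b * m + 16 * b\<^sup>2 * (A - n)\<close> by (simp add: add_pos_nonneg)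
    next
      case False
      then have "4 * lS (evw (q, t) w (1/4)) + 4 * (b ^ 3 + b * m) * \<gamma> + 16 * b\<^sup>2 * \<gamma> * (A - n)
          = \<gamma> * (4 * b ^ 3 + (4 * b * m + 16 * b\<^sup>2 * (A - n)))"
        using lS_quarter_point(3)[OF lS \<open>q \<notin> F\<close> not_successor] by (simp add: algebra_simps)
      with b \<open>0 < \<gamma>\<close> \<open>0 \<le> 4 * b * m + 16 * b\<^sup>2 * (A - n)\<close> show ?thesis
        by (simp add: add_pos_nonneg)
    qed
  qed
  with successor show ?thesis
    unfolding A_def n_def w by (simp add: algebra_simps)
qed

lemma successor_unique_steepest_descent:
  fixes t s :: "'d::finite \<Rightarrow> bool" and q :: "'q::finite"
  assumes lS: "lS_ok F \<delta>1 b \<gamma> lS" and "q \<notin> F" and "0 < \<gamma>" and "4 * real CARD('d) < b"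
  defines "\<Phi> \<equiv> \<lambda>y. lS y + 2 * b\<^sup>2 * \<gamma> * (norm (symv s - Tdown y))\<^sup>2"
    and "x \<equiv> ev (q, t)"
  shows "\<forall>y\<in>simplexS. \<exists>L. has_dirderiv \<Phi> x (y - x) L"
    and "\<forall>y\<in>simplexS. y \<noteq> ev (\<delta>1 q t, s)
      \<longrightarrow> dirderiv \<Phi> x (ev (\<delta>1 q t, s) - x) < dirderiv \<Phi> x (y - x)"
proof -
  \<comment> \<open>\<open>D w\<close> is the slope of \<open>\<Phi>\<close> at \<open>x\<close> towards the vertex \<open>ev w\<close>\<close>
  define D where "D w = 4 * lS (evw (q, t) w (1/4))
    - 16 * b\<^sup>2 * \<gamma> * real (card {j. s j \<noteq> t j \<and> snd w j \<noteq> t j})" for w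
  have deriv: "has_dirderiv \<Phi> x (y - x) (\<Sum>w\<in>UNIV. y $ w * D w)" if "y \<in> simplexS" for y
  proof -
    have "lS (ev (q, t)) = 0"
      using lS_okD(2)[OF lS] \<open>q \<notin> F\<close> by (simp add: wv_def)
    with has_dirderiv_at_vertex[OF lS_okD(1)[OF lS] that, where v = "(q, t)" and \<kappa> = "2 * b\<^sup>2 * \<gamma>" and r = "symv s"]
    show ?thesis
      unfolding \<Phi>_def x_def D_def symv_diff_inner by (simp add: algebra_simps)
  qed
  then show "\<forall>y\<in>simplexS. \<exists>L. has_dirderiv \<Phi> x (y - x) L"
    by blast
  have less: "D (\<delta>1 q t, s) < D w" if "w \<noteq> (\<delta>1 q t, s)" for w
    using successor_slope_less[OF assms(1-4) that] unfolding D_def by simp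
  show "\<forall>y\<in>simplexS. y \<noteq> ev (\<delta>1 q t, s)
      \<longrightarrow> dirderiv \<Phi> x (ev (\<delta>1 q t, s) - x) < dirderiv \<Phi> x (y - x)"
  proof (intro ballI impI)
    fix y :: "real^('q \<times> ('d \<Rightarrow> bool))"
    assume "y \<in> simplexS" and "y \<noteq> ev (\<delta>1 q t, s)"
    have "dirderiv \<Phi> x (ev (\<delta>1 q t, s) - x) = D (\<delta>1 q t, s)"
      using dirderiv_eq[OF deriv[OF ev_in_simplexS]] by (simp add: ev_nth if_distrib[of "\<lambda>c. c * _"] cong: if_cong)
    also have "\<dots> < (\<Sum>w\<in>UNIV. y $ w * D w)"
      using \<open>y \<in> simplexS\<close> \<open>y \<noteq> ev (\<delta>1 q t, s)\<close> less by (rule simplexS_weighted_sum_gt)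
    also have "\<dots> = dirderiv \<Phi> x (y - x)"
      using dirderiv_eq[OF deriv[OF \<open>y \<in> simplexS\<close>]] by simp
    finally show "dirderiv \<Phi> x (ev (\<delta>1 q t, s) - x) < dirderiv \<Phi> x (y - x)" .
  qed
qed

section \<open>Gradient steps in the tape and head variables\<close>

lemma deriv_affine_square:
  fixes K \<kappa> \<alpha> \<beta> :: real
  assumes "\<And>s. f s = K + \<kappa> * (\<alpha> + \<beta> * s)\<^sup>2"
  shows "deriv f s0 = 2 * \<kappa> * \<beta> * (\<alpha> + \<beta> * s0)"
proof -
  have "((\<lambda>s. K + \<kappa> * (\<alpha> + \<beta> * s)\<^sup>2) has_real_derivative 2 * \<kappa> * \<beta> * (\<alpha> + \<beta> * s0)) (at s0)"
    by (auto intro!: derivative_eq_intros simp: algebra_simps)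
  moreover have "f = (\<lambda>s. K + \<kappa> * (\<alpha> + \<beta> * s)\<^sup>2)"
    using assms by (rule ext)
  ultimately show ?thesis
    by (simp add: DERIV_imp_deriv)
qed

lemma mgrad_half_norm_diagTH:
  fixes T H :: "'d::finite tmat" and z :: "real^'d"
  assumes "inr tau i"
  shows "mgrad tau (\<lambda>T0. 1/2 * \<gamma> * (norm (diagTH tau T0 H - z))\<^sup>2) T i j
    = \<gamma> * (diagTH tau T H $ j - z $ j) * H i j"
proof -
  define Ts where "Ts s = T(i := (T i)(j := s))" for s
  have rows: "i \<in> {0..<int tau}"
    using assms by (simp add: inr_def)
  have other_column: "diagTH tau (Ts s) H $ j' = diagTH tau T H $ j'" if "j' \<noteq> j" for s j'
    unfolding diagTH_def Ts_def using that by (auto intro!: sum.cong)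
  have column: "diagTH tau (Ts s) H $ j = diagTH tau T H $ j - T i j * H i j + H i j * s" for s
  proof -
    have "(\<Sum>i'\<in>{0..<int tau} - {i}. Ts s i' j * H i' j) = (\<Sum>i'\<in>{0..<int tau} - {i}. T i' j * H i' j)"
      by (rule sum.cong) (auto simp: Ts_def)
    then show ?thesis
      unfolding diagTH_def by (simp add: sum.remove[OF finite_atLeastLessThan_int rows] Ts_def algebra_simps)
  qed
  define K where "K = 1/2 * \<gamma> * (\<Sum>j'\<in>UNIV - {j}. (diagTH tau T H $ j' - z $ j')\<^sup>2)"
  have "1/2 * \<gamma> * (norm (diagTH tau (Ts s) H - z))\<^sup>2
      = K + (1/2 * \<gamma>) * ((diagTH tau T H $ j - T i j * H i j - z $ j) + H i j * s)\<^sup>2" for s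
  proof -
    have "(norm (diagTH tau (Ts s) H - z))\<^sup>2
        = (diagTH tau (Ts s) H $ j - z $ j)\<^sup>2 + (\<Sum>j'\<in>UNIV - {j}. (diagTH tau (Ts s) H $ j' - z $ j')\<^sup>2)"
      unfolding power2_norm_eq_inner inner_vec_def by (simp add: sum.remove[of UNIV j] power2_eq_square)
    also have "(\<Sum>j'\<in>UNIV - {j}. (diagTH tau (Ts s) H $ j' - z $ j')\<^sup>2)
        = (\<Sum>j'\<in>UNIV - {j}. (diagTH tau T H $ j' - z $ j')\<^sup>2)"
      by (rule sum.cong) (auto simp: other_column)
    finally show ?thesis
      unfolding K_def column by (simp add: algebra_simps)
  qed
  then have "deriv (\<lambda>s. 1/2 * \<gamma> * (norm (diagTH tau (Ts s) H - z))\<^sup>2) (T i j)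
      = 2 * (1/2 * \<gamma>) * H i j * ((diagTH tau T H $ j - T i j * H i j - z $ j) + H i j * T i j)"
    by (rule deriv_affine_square)
  then show ?thesis
    unfolding mgrad_def Ts_def using assms by (simp add: algebra_simps)
qed

lemma mgrad_half_fro2_dist:
  fixes P H :: "'d::finite tmat"
  assumes "inr tau i"
  shows "mgrad tau (\<lambda>H0. 1/2 * \<gamma> * fro2 tau (\<lambda>i j. P i j - H0 i j)) H i j = - \<gamma> * (P i j - H i j)"
proof -
  define Hs where "Hs s = H(i := (H i)(j := s))" for s
  have rows: "i \<in> {0..<int tau}"
    using assms by (simp add: inr_def)
  define K where "K = 1/2 * \<gamma> * ((\<Sum>i'\<in>{0..<int tau} - {i}. \<Sum>j'\<in>UNIV. (P i' j' - H i' j')\<^sup>2)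
    + (\<Sum>j'\<in>UNIV - {j}. (P i j' - H i j')\<^sup>2))"
  have "1/2 * \<gamma> * fro2 tau (\<lambda>i j. P i j - Hs s i j) = K + (1/2 * \<gamma>) * (P i j + (-1) * s)\<^sup>2" for s
  proof -
    have "fro2 tau (\<lambda>i j. P i j - Hs s i j)
        = (\<Sum>j'\<in>UNIV. (P i j' - Hs s i j')\<^sup>2)
          + (\<Sum>i'\<in>{0..<int tau} - {i}. \<Sum>j'\<in>UNIV. (P i' j' - Hs s i' j')\<^sup>2)"
      unfolding fro2_def by (simp add: sum.remove[OF finite_atLeastLessThan_int rows])
    also have "(\<Sum>i'\<in>{0..<int tau} - {i}. \<Sum>j'\<in>UNIV. (P i' j' - Hs s i' j')\<^sup>2)
        = (\<Sum>i'\<in>{0..<int tau} - {i}. \<Sum>j'\<in>UNIV. (P i' j' - H i' j')\<^sup>2)"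
      by (rule sum.cong) (auto simp: Hs_def)
    also have "(\<Sum>j'\<in>UNIV. (P i j' - Hs s i j')\<^sup>2)
        = (P i j - s)\<^sup>2 + (\<Sum>j'\<in>UNIV - {j}. (P i j' - H i j')\<^sup>2)"
      by (simp add: sum.remove[of UNIV j] Hs_def)
    finally show ?thesis
      unfolding K_def by (simp add: algebra_simps)
  qed
  then have "deriv (\<lambda>s. 1/2 * \<gamma> * fro2 tau (\<lambda>i j. P i j - Hs s i j)) (H i j)
      = 2 * (1/2 * \<gamma>) * (-1) * (P i j + (-1) * H i j)"
    by (rule deriv_affine_square)
  then show ?thesis
    unfolding mgrad_def Hs_def using assms by simp
qed

lemma tape_gradient_step:
  fixes T H :: "'d::finite tmat" and z :: "real^'d"
  assumes "\<gamma> \<noteq> 0" and "\<And>i j. \<not> inr tau i \<Longrightarrow> H i j = 0"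
  shows "(\<lambda>i j. T i j - (1/\<gamma>) * (if j \<in> RO then 0
        else mgrad tau (\<lambda>T0. 1/2 * \<gamma> * (norm (diagTH tau T0 H - z))\<^sup>2) T i j))
    = (\<lambda>i j. if j \<in> RO then T i j else T i j + H i j * (z $ j - diagTH tau T H $ j))"
proof (intro ext)
  fix i j
  show "T i j - (1/\<gamma>) * (if j \<in> RO then 0
        else mgrad tau (\<lambda>T0. 1/2 * \<gamma> * (norm (diagTH tau T0 H - z))\<^sup>2) T i j)
      = (if j \<in> RO then T i j else T i j + H i j * (z $ j - diagTH tau T H $ j))"
  proof (cases "inr tau i")
    case True
    with assms(1) show ?thesis
      unfolding mgrad_half_norm_diagTH[OF True] by (simp add: field_simps)
  next
    case False
    with assms(2) show ?thesis
      by (simp add: mgrad_def)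
  qed
qed

lemma head_gradient_step:
  fixes P H :: "'d::finite tmat"
  assumes "\<gamma> \<noteq> 0" and "\<And>i j. \<not> inr tau i \<Longrightarrow> H i j = 0 \<and> P i j = 0"
  shows "(\<lambda>i j. H i j - (1/\<gamma>) * mgrad tau (\<lambda>H0. 1/2 * \<gamma> * fro2 tau (\<lambda>i j. P i j - H0 i j)) H i j) = P"
proof (intro ext)
  fix i j
  show "H i j - (1/\<gamma>) * mgrad tau (\<lambda>H0. 1/2 * \<gamma> * fro2 tau (\<lambda>i j. P i j - H0 i j)) H i j = P i j"
  proof (cases "inr tau i")
    case True
    with assms(1) show ?thesis
      unfolding mgrad_half_fro2_dist[OF True] by simp
  next
    case False
    with assms(2) show ?thesis
      by (simp add: mgrad_def)
  qed
qed

section \<open>One machine step is one step of the iteration\<close>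

lemma iter_step_of_tm_step:
  fixes T H T' H' :: "'d::finite tmat" and q q' :: "'q::finite"
  assumes "valid_config tau T H" and "heads_interior tau H"
    and lS: "lS_ok F \<delta>1 b \<gamma> lS" and "q \<notin> F" and "0 < \<gamma>" and "4 * real CARD('d) < b"
    and step: "tm_step tau RO \<delta>1 \<delta>2 \<delta>3 (q, T, H) = (q', T', H')"
  shows "iter_step tau RO \<delta>2 \<delta>3 \<gamma> b lS (ev (q, readsym tau T H)) T H (ev (q', readsym tau T' H')) T' H'"
proof -
  define t where "t = readsym tau T H"
  obtain h h' where H: "H = head_matrix h" and H'_head: "shift_e tau \<delta>3 (q, t) H = head_matrix h'"
    and heads: "\<And>j. inr tau (h j)" "\<And>j. inr tau (h' j)" "\<And>j. h' j \<noteq> h j"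
    and T: "\<And>i j. inr tau i \<Longrightarrow> T i j = 1 \<or> T i j = -1"
    using valid_config_shiftE[OF assms(1,2)] by blast
  have "(q', T', H') = (\<delta>1 q t,
      \<lambda>i j. if j \<in> RO then T i j else T i j + H i j * (sym (\<delta>2 q t j) - sym (t j)),
      shift_e tau \<delta>3 (q, t) H)"
    unfolding step[symmetric] tm_step_def t_def by (simp add: Let_def)
  then have q': "q' = \<delta>1 q t"
    and T': "T' = (\<lambda>i j. if j \<in> RO then T i j else T i j + H i j * (sym (\<delta>2 q t j) - sym (t j)))"
    and H': "H' = shift_e tau \<delta>3 (q, t) H"
    by simp_all
  note H'_head = H'_head[folded H']
  have outside: "H i j = 0 \<and> H' i j = 0" if "\<not> inr tau i" for i j
    using that heads[of j] unfolding H H'_head head_matrix_def by auto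
  define s where "s = readsym tau T H'"
  have "T' (h' j) j = T (h' j) j" for j
    using heads(3)[of j] unfolding T' H head_matrix_def by simp
  then have s': "readsym tau T' H' = s"
    unfolding s_def readsym_def H'_head by (simp add: diagTH_head_matrix heads)
  have read: "diagTH tau T H = symv t"
    unfolding t_def H by (rule symv_readsym_head_matrix[OF heads(1) T, symmetric])
  have shifted: "diagTH tau T (shiftS tau \<delta>3 (ev (q, t)) H) = symv s"
    unfolding shiftS_ev H'[symmetric] s_def H'_head
    by (rule symv_readsym_head_matrix[OF heads(2) T, symmetric])
  have tape: "(\<lambda>i j. T i j - (1/\<gamma>) * (if j \<in> RO then 0
      else mgrad tau (\<lambda>T0. 1/2 * \<gamma> * (norm (diagTH tau T0 H - Tcurv \<delta>2 (ev (q, t))))\<^sup>2) T i j)) = T'"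
  proof -
    have "(\<lambda>i j. T i j - (1/\<gamma>) * (if j \<in> RO then 0
        else mgrad tau (\<lambda>T0. 1/2 * \<gamma> * (norm (diagTH tau T0 H - Tcurv \<delta>2 (ev (q, t))))\<^sup>2) T i j))
      = (\<lambda>i j. if j \<in> RO then T i j else T i j + H i j * (Tcurv \<delta>2 (ev (q, t)) $ j - diagTH tau T H $ j))"
      using \<open>0 < \<gamma>\<close> outside by (intro tape_gradient_step) auto
    also have "\<dots> = T'"
      unfolding read T' Tcurv_ev symv_def by (simp cong: if_cong)
    finally show ?thesis .
  qed
  have head: "(\<lambda>i j. H i j - (1/\<gamma>) * mgrad tau
      (\<lambda>H0. 1/2 * \<gamma> * fro2 tau (\<lambda>i j. shiftS tau \<delta>3 (ev (q, t)) H i j - H0 i j)) H i j) = H'"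
    unfolding shiftS_ev H'[symmetric] using \<open>0 < \<gamma>\<close> outside by (intro head_gradient_step) auto
  note descent = successor_unique_steepest_descent[OF lS \<open>q \<notin> F\<close> \<open>0 < \<gamma>\<close> assms(6), where s = s and t = t]
  show ?thesis
    unfolding iter_step_def Let_def t_def[symmetric] q' s' shifted
    using descent ev_in_simplexS tape head by simp
qed

lemma four_mult_less_of_cubic_bound:
  fixes b d :: real
  assumes "0 < b" and "0 < d" and "b ^ 3 / 2 - d * b \<ge> 2 * d * b\<^sup>2"
  shows "4 * d < b"
proof (rule ccontr)
  assume "\<not> 4 * d < b"
  then have "b * b * b \<le> b * b * (4 * d)"
    using assms(1) by (intro mult_left_mono) auto
  moreover have "0 < d * b"
    using assms(1,2) by simp
  ultimately show False
    using assms(3) unfolding power3_eq_cube power2_eq_square by (simp add: algebra_simps)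
qed

theorem mainTheorem3:
  fixes tau :: nat
    and F :: "'q::finite set"
    and RO :: "'d::finite set"
    and \<delta>1 :: "'q \<Rightarrow> ('d \<Rightarrow> bool) \<Rightarrow> 'q"
    and \<delta>2 \<delta>3 :: "'q \<Rightarrow> ('d \<Rightarrow> bool) \<Rightarrow> ('d \<Rightarrow> bool)"
    and \<gamma> b c :: real
    and lS :: "real^('q \<times> ('d \<Rightarrow> bool)) \<Rightarrow> real"
    and K :: nat
    and q :: "nat \<Rightarrow> 'q"
    and T H :: "nat \<Rightarrow> 'd tmat"
  assumes no_2cycle: "\<forall>v w. \<not> ((v, w) \<in> edges \<delta>1 \<and> (w, v) \<in> edges \<delta>1)"
    and gamma_pos: "\<gamma> > 0"
    and b_pos: "b > 0"
    and b1: "b^3 \<ge> (b^3 + real CARD('d) * b) / 2"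
    and b2: "b^3 / 2 - real CARD('d) * b \<ge> 2 * real CARD('d) * b^2"
    and b3: "b^2 > b"
    and lS: "lS_ok F \<delta>1 b \<gamma> lS"
    and valid: "\<forall>k\<le>K. valid_config tau (T k) (H k) \<and> heads_interior tau (H k)"
    and steps: "\<forall>k<K. tm_step tau RO \<delta>1 \<delta>2 \<delta>3 (q k, T k, H k) = (q (Suc k), T (Suc k), H (Suc k))"
    and nonhalt: "\<forall>k<K. q k \<notin> F"
    and halt: "q K \<in> F"
  shows "(\<forall>k<K. iter_step tau RO \<delta>2 \<delta>3 \<gamma> b lS
              (ev (q k, readsym tau (T k) (H k))) (T k) (H k)
              (ev (q (Suc k), readsym tau (T (Suc k)) (H (Suc k)))) (T (Suc k)) (H (Suc k)))
       \<and> (\<forall>k<K. c \<le> loss tau \<delta>2 \<delta>3 \<gamma> b c lS (ev (q k, readsym tau (T k) (H k))) (T k) (H k)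
              \<and> loss tau \<delta>2 \<delta>3 \<gamma> b c lS (ev (q k, readsym tau (T k) (H k))) (T k) (H k)
                  \<le> c + 8 * b^2 * real CARD('d) * \<gamma> + 3 * real CARD('d) * \<gamma>)
       \<and> loss tau \<delta>2 \<delta>3 \<gamma> b c lS (ev (q K, readsym tau (T K) (H K))) (T K) (H K)
            \<le> c + 8 * b^2 * real CARD('d) * \<gamma> + 3 * real CARD('d) * \<gamma> - b^3 * \<gamma>"
proof -
  let ?x = "\<lambda>k. ev (q k, readsym tau (T k) (H k))"
  let ?loss = "\<lambda>k. loss tau \<delta>2 \<delta>3 \<gamma> b c lS (?x k) (T k) (H k)"
  let ?bound = "c + 8 * b\<^sup>2 * real CARD('d) * \<gamma> + 3 * real CARD('d) * \<gamma>"
  have big: "4 * real CARD('d) < b"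
    using b_pos b2 by (intro four_mult_less_of_cubic_bound) auto
  have bounds: "c + lS (?x k) \<le> ?loss k"
    "?loss k \<le> c + lS (?x k) + 8 * b\<^sup>2 * real CARD('d) * \<gamma> + 3 * real CARD('d) * \<gamma>"
    if "k \<le> K" for k
    using valid that gamma_pos by (auto intro: loss_at_vertex_bounds)
  have weight: "lS (?x k) = (if q k \<in> F then - (b ^ 3 * \<gamma>) else 0)" for k
    using lS_okD(2)[OF lS] by (simp add: wv_def)
  show ?thesis
  proof (intro conjI allI impI)
    fix k
    assume "k < K"
    with valid steps nonhalt
    show "iter_step tau RO \<delta>2 \<delta>3 \<gamma> b lS (?x k) (T k) (H k) (?x (Suc k)) (T (Suc k)) (H (Suc k))"
      by (intro iter_step_of_tm_step[OF _ _ lS _ gamma_pos big]) auto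
    from \<open>k < K\<close> nonhalt bounds[of k] weight[of k] show "c \<le> ?loss k" and "?loss k \<le> ?bound"
      by auto
  next
    from halt bounds[of K] weight[of K] show "?loss K \<le> ?bound - b ^ 3 * \<gamma>"
      by auto
  qed
qed
end
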